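(* Let $\mathcal{A}$ be a bounded PTA with clock set $X$, let $s$ and $s'$ be symbolic states of $\mathcal{A}$, let $M\in\mathbb{N}$ with $M\ge\mathrm{maxC}(\mathcal{A})$, and let $\nu$ be a parameter valuation within the parameter domain such that $\nu(\mathrm{Ext}^X_M(s))=\nu(\mathrm{Ext}^X_M(s'))$. Then for every state $(l,v)\in\nu(s)$ there exists a state $(l,v')\in\nu(s')$ such that $(l,v)$ and $(l,v')$ are bisimilar in $\nu(\mathcal{A})$.
   Context: A PTA is $\mathcal{A}=(\Sigma,L,l_0,L_F,X,P,\mathbb{D},I,E)$: finite actions $\Sigma$, finite locations $L$, initial $l_0$, accepting $L_F$, clocks $X$ (real-valued, $\ge0$), parameters $P$, parameter domain $\mathbb{D}(p)=(\mathbb{D}^-(p),\mathbb{D}^+(p))$ with admissible values $[\mathbb{D}^-(p),\mathbb{D}^+(p)]$, invariants $I(l)$ (clock guards), and edges $(l,g,a,R,l')$ with guard $g$ and reset set $R\subseteq X$. A simple clock guard is $x\bowtie\sum_i\alpha_ip_i+z$ with $\alpha_i,z\in\mathbb{Z}$; a clock guard is a conjunction of them. $\mathcal{A}$ is bounded if all $\mathbb{D}^\pm(p)$ are finite. $G(\mathcal{A})$ is the set of simple clock guards among the conjuncts of guards and invariants. For $g: x\bowtie\sum_i\alpha_ip_i+z$, $\mathrm{maxC}(g)=\sum_i\alpha_i\gamma_i+z$ with $\gamma_i=\mathbb{D}^-(p_i)$ if $\alpha_i<0$, $\mathbb{D}^+(p_i)$ if $\alpha_i>0$, $0$ otherwise;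 $\mathrm{maxC}(\mathcal{A})=\max_{g\in G(\mathcal{A})}\mathrm{maxC}(g)$. For a parameter valuation $\nu$, $\nu(\mathcal{A})$ is the timed automaton obtained by substituting $\nu(p)$ for each $p$; its semantics is the transition system with states $(l,v)$ ($v$ satisfying $\nu(I(l))$), delay transitions $(l,v)\to(l,v+d)$ if all $(l,v+d')$, $d'\in[0,d]$, are states, and discrete transitions along edges $(l,g,a,R,l')$ from $(l,v)$ to $(l',v[R:=0])$ if $v$ satisfies $\nu(g)$ and both are states. Two states are bisimilar if related by a bisimulation of this labelled transition system. A symbolic state is $(l,C)$ with $C$ a set of valuations of $X\cup P$; $\nu(s)=\{(l,v)\mid(v,\nu)\in C\}$. Cylindrification: $\mathrm{Cyl}_x(C)=\{w\mid\exists w'\in C,\ w'(y)=w(y)\ \forall y\ne x,\ w(x)\ge0\}$. $\mathrm{Ext}^x_M(C)=(C\cap(x\le M))\cup(\mathrm{Cyl}_x(C\cap(x>M))\cap(x>M))$; $\mathrm{Ext}^X_M$ is the composition of all $\mathrm{Ext}^x_M$, $x\in X$ (order irrelevant), applied to symbolic states via their constraint. *)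

theory Defs
  imports "HOL-Analysis.Analysis" "HOL-Library.Extended_Real"
begin

text \<open>The clock set X is the (finite) type 'x and the
  parameter set P is the (finite) type 'p; valuations of X are functions 'x => real
  and parameter valuations are functions 'p => real.\<close>

datatype cmp_op = Lt | Le | Eq | Ge | Gt

fun cmp :: "cmp_op \<Rightarrow> real \<Rightarrow> real \<Rightarrow> bool" where
  "cmp Lt a b = (a < b)"
| "cmp Le a b = (a \<le> b)"
| "cmp Eq a b = (a = b)"
| "cmp Ge a b = (a \<ge> b)"
| "cmp Gt a b = (a > b)"

text \<open>Simple clock guard  x op (sum_i alpha_i p_i + z)  with integer coefficients.\<close>
datatype ('x, 'p) sguard = SG 'x cmp_op "'p \<Rightarrow> int" int

type_synonym ('x, 'p) guard = "('x, 'p) sguard list"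

definition lin_val :: "('p::finite \<Rightarrow> real) \<Rightarrow> ('p \<Rightarrow> int) \<Rightarrow> int \<Rightarrow> real" where
  "lin_val \<nu> \<alpha> z = (\<Sum>p\<in>UNIV. real_of_int (\<alpha> p) * \<nu> p) + real_of_int z"

fun sat_sg :: "('x \<Rightarrow> real) \<Rightarrow> ('p::finite \<Rightarrow> real) \<Rightarrow> ('x, 'p) sguard \<Rightarrow> bool" where
  "sat_sg v \<nu> (SG x r \<alpha> z) = cmp r (v x) (lin_val \<nu> \<alpha> z)"

definition sat_g :: "('x \<Rightarrow> real) \<Rightarrow> ('p::finite \<Rightarrow> real) \<Rightarrow> ('x, 'p) guard \<Rightarrow> bool" where
  "sat_g v \<nu> g = (\<forall>c\<in>set g. sat_sg v \<nu> c)"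

record ('a, 'l, 'x, 'p) pta =
  act    :: "'a set"
  locs   :: "'l set"
  init   :: 'l
  accept :: "'l set"
  dlo    :: "'p \<Rightarrow> ereal"
  dhi    :: "'p \<Rightarrow> ereal"
  inv    :: "'l \<Rightarrow> ('x, 'p) guard"
  edges  :: "('l \<times> ('x, 'p) guard \<times> 'a \<times> 'x set \<times> 'l) set"

definition wf_pta :: "('a, 'l, 'x::finite, 'p::finite) pta \<Rightarrow> bool" where
  "wf_pta A \<longleftrightarrow> finite (act A) \<and> finite (locs A) \<and> init A \<in> locs A \<and>
     accept A \<subseteq> locs A \<and> finite (edges A) \<and>
     (\<forall>(l, g, a, R, l') \<in> edges A. l \<in> locs A \<and> a \<in> act A \<and> l' \<in> locs A)"

definition bounded_pta :: "('a, 'l, 'x::finite, 'p::finite) pta \<Rightarrow> bool" where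
  "bounded_pta A \<longleftrightarrow> (\<forall>p. \<bar>dlo A p\<bar> \<noteq> \<infinity> \<and> \<bar>dhi A p\<bar> \<noteq> \<infinity>)"

definition admissible :: "('a, 'l, 'x::finite, 'p::finite) pta \<Rightarrow> ('p \<Rightarrow> real) \<Rightarrow> bool" where
  "admissible A \<nu> \<longleftrightarrow> (\<forall>p. dlo A p \<le> ereal (\<nu> p) \<and> ereal (\<nu> p) \<le> dhi A p)"

definition guards_of :: "('a, 'l, 'x::finite, 'p::finite) pta \<Rightarrow> ('x, 'p) sguard set" where
  "guards_of A = (\<Union>l\<in>locs A. set (inv A l)) \<union>
                 (\<Union>(l, g, a, R, l') \<in> edges A. set g)"

fun maxC_sg :: "('a, 'l, 'x::finite, 'p::finite) pta \<Rightarrow> ('x, 'p) sguard \<Rightarrow> real" where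
  "maxC_sg A (SG x r \<alpha> z) =
     (\<Sum>p\<in>UNIV. real_of_int (\<alpha> p) *
        (if \<alpha> p < 0 then real_of_ereal (dlo A p)
         else if \<alpha> p > 0 then real_of_ereal (dhi A p) else 0)) + real_of_int z"

definition maxC :: "('a, 'l, 'x::finite, 'p::finite) pta \<Rightarrow> real" where
  "maxC A = Max (maxC_sg A ` guards_of A)"

definition is_state :: "('a, 'l, 'x::finite, 'p::finite) pta \<Rightarrow> ('p \<Rightarrow> real) \<Rightarrow> 'l \<times> ('x \<Rightarrow> real) \<Rightarrow> bool" where
  "is_state A \<nu> s \<longleftrightarrow> fst s \<in> locs A \<and>
      (\<forall>x. snd s x \<ge> 0) \<and> sat_g (snd s) \<nu> (inv A (fst s))"

datatype 'a label = Delay real | Act 'a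

inductive step :: "('a, 'l, 'x::finite, 'p::finite) pta \<Rightarrow> ('p \<Rightarrow> real) \<Rightarrow>
    'l \<times> ('x \<Rightarrow> real) \<Rightarrow> 'a label \<Rightarrow> 'l \<times> ('x \<Rightarrow> real) \<Rightarrow> bool"
  for A \<nu> where
  delay: "\<lbrakk>d \<ge> 0; \<forall>d'. 0 \<le> d' \<and> d' \<le> d \<longrightarrow> is_state A \<nu> (l, \<lambda>x. v x + d')\<rbrakk>
     \<Longrightarrow> step A \<nu> (l, v) (Delay d) (l, \<lambda>x. v x + d)"
| discrete: "\<lbrakk>(l, g, a, R, l') \<in> edges A; sat_g v \<nu> g; is_state A \<nu> (l, v);
      is_state A \<nu> (l', \<lambda>x. if x \<in> R then 0 else v x)\<rbrakk>
     \<Longrightarrow> step A \<nu> (l, v) (Act a) (l', \<lambda>x. if x \<in> R then 0 else v x)"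

definition bisimulation :: "('a, 'l, 'x::finite, 'p::finite) pta \<Rightarrow> ('p \<Rightarrow> real) \<Rightarrow>
    (('l \<times> ('x \<Rightarrow> real)) \<times> ('l \<times> ('x \<Rightarrow> real))) set \<Rightarrow> bool" where
  "bisimulation A \<nu> Rel \<longleftrightarrow>
     (\<forall>(p, q) \<in> Rel. is_state A \<nu> p \<and> is_state A \<nu> q \<and>
        (\<forall>\<alpha> p'. step A \<nu> p \<alpha> p' \<longrightarrow> (\<exists>q'. step A \<nu> q \<alpha> q' \<and> (p', q') \<in> Rel)) \<and>
        (\<forall>\<alpha> q'. step A \<nu> q \<alpha> q' \<longrightarrow> (\<exists>p'. step A \<nu> p \<alpha> p' \<and> (p', q') \<in> Rel)))"

definition bisimilar :: "('a, 'l, 'x::finite, 'p::finite) pta \<Rightarrow> ('p \<Rightarrow> real) \<Rightarrow>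
    'l \<times> ('x \<Rightarrow> real) \<Rightarrow> 'l \<times> ('x \<Rightarrow> real) \<Rightarrow> bool" where
  "bisimilar A \<nu> s t \<longleftrightarrow> (\<exists>Rel. bisimulation A \<nu> Rel \<and> (s, t) \<in> Rel)"

text \<open>Symbolic states: a location and a set of valuations of X \<union> P.\<close>
type_synonym ('x, 'p) constr = "(('x \<Rightarrow> real) \<times> ('p \<Rightarrow> real)) set"
type_synonym ('l, 'x, 'p) symstate = "'l \<times> ('x, 'p) constr"

definition sym_inst :: "('p \<Rightarrow> real) \<Rightarrow> ('l, 'x, 'p) symstate \<Rightarrow> ('l \<times> ('x \<Rightarrow> real)) set" where
  "sym_inst \<nu> s = {(fst s, v) | v. (v, \<nu>) \<in> snd s}"

definition Cyl :: "'x \<Rightarrow> ('x, 'p) constr \<Rightarrow> ('x, 'p) constr" where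
  "Cyl x C = {w. \<exists>w'\<in>C. (\<forall>y. y \<noteq> x \<longrightarrow> fst w' y = fst w y) \<and> snd w' = snd w \<and> fst w x \<ge> 0}"

definition Ext1 :: "nat \<Rightarrow> 'x \<Rightarrow> ('x, 'p) constr \<Rightarrow> ('x, 'p) constr" where
  "Ext1 M x C = {w \<in> C. fst w x \<le> real M} \<union>
                (Cyl x {w \<in> C. fst w x > real M} \<inter> {w. fst w x > real M})"

text \<open>Ext^X_M: composition of all Ext^x_M (order irrelevant; we fix one enumeration).\<close>
definition ExtX :: "nat \<Rightarrow> ('x::finite, 'p) constr \<Rightarrow> ('x, 'p) constr" where
  "ExtX M C = foldr (Ext1 M) (SOME xs. set xs = (UNIV :: 'x set) \<and> distinct xs) C"

definition ExtX_sym :: "nat \<Rightarrow> ('l, 'x::finite, 'p) symstate \<Rightarrow> ('l, 'x, 'p) symstate" where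
  "ExtX_sym M s = (fst s, ExtX M (snd s))"

end

theory Submission
  imports Defs
begin

text \<open>Two clock valuations that agree on every clock except those exceeding a bound c in
  both valuations satisfy the same simple guards whose constants are at most c, and this is
  preserved by delays and resets; hence such valuations are bisimilar.  Ext^X_M only adds
  valuations that are equivalent in this sense (with c = M) to valuations already present, and
  for an admissible bounded parameter valuation every guard constant is at most maxC \<le> M.\<close>

definition clock_equiv :: "real \<Rightarrow> ('x \<Rightarrow> real) \<Rightarrow> ('x \<Rightarrow> real) \<Rightarrow> bool" where
  "clock_equiv c v v' \<longleftrightarrow> (\<forall>x. v x = v' x \<or> (c < v x \<and> c < v' x))"

lemma clock_equiv_refl: "clock_equiv c v v"
  unfolding clock_equiv_def by simp

lemma clock_equiv_sym: "clock_equiv c v v' \<Longrightarrow> clock_equiv c v' v"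
  unfolding clock_equiv_def by metis

lemma clock_equiv_trans: "clock_equiv c u v \<Longrightarrow> clock_equiv c v w \<Longrightarrow> clock_equiv c u w"
  unfolding clock_equiv_def by metis

lemma clock_equiv_delay:
  "clock_equiv c v v' \<Longrightarrow> 0 \<le> d \<Longrightarrow> clock_equiv c (\<lambda>x. v x + d) (\<lambda>x. v' x + d)"
  unfolding clock_equiv_def by force

lemma clock_equiv_reset:
  "clock_equiv c v v' \<Longrightarrow>
   clock_equiv c (\<lambda>x. if x \<in> R then 0 else v x) (\<lambda>x. if x \<in> R then 0 else v' x)"
  unfolding clock_equiv_def by force

lemma Ext1_clock_equiv:
  assumes "w \<in> Ext1 M x C"
  shows "\<exists>w'\<in>C. snd w' = snd w \<and> clock_equiv (real M) (fst w) (fst w')"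
proof -
  consider "w \<in> C"
    | w' where "w' \<in> C" "snd w' = snd w" "\<forall>y. y \<noteq> x \<longrightarrow> fst w' y = fst w y"
        "real M < fst w' x" "real M < fst w x"
    using assms unfolding Ext1_def Cyl_def by blast
  then show ?thesis
  proof cases
    case 1
    then show ?thesis by (auto intro: clock_equiv_refl)
  next
    case 2
    then have "clock_equiv (real M) (fst w) (fst w')"
      unfolding clock_equiv_def by metis
    with 2 show ?thesis by blast
  qed
qed

lemma foldr_Ext1_clock_equiv:
  "w \<in> foldr (Ext1 M) xs C \<Longrightarrow> \<exists>w'\<in>C. snd w' = snd w \<and> clock_equiv (real M) (fst w) (fst w')"
proof (induction xs arbitrary: w)
  case Nil
  then show ?case by (auto intro: clock_equiv_refl)
next
  case (Cons x xs)
  then obtain w1 where "w1 \<in> foldr (Ext1 M) xs C" "snd w1 = snd w"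
      "clock_equiv (real M) (fst w) (fst w1)"
    using Ext1_clock_equiv by fastforce
  with Cons.IH show ?case by (metis clock_equiv_trans)
qed

lemma subset_Ext1: "C \<subseteq> Ext1 M x C"
  unfolding Ext1_def Cyl_def by force

lemma subset_foldr_Ext1: "C \<subseteq> foldr (Ext1 M) xs C"
  by (induction xs) (use subset_Ext1 in fastforce)+

lemma sym_inst_subset_ExtX_sym: "sym_inst \<nu> s \<subseteq> sym_inst \<nu> (ExtX_sym M s)"
  unfolding sym_inst_def ExtX_sym_def ExtX_def using subset_foldr_Ext1 by fastforce

lemma sym_inst_ExtX_sym_clock_equiv:
  assumes "(l, v) \<in> sym_inst \<nu> (ExtX_sym M s)"
  shows "\<exists>v'. (l, v') \<in> sym_inst \<nu> s \<and> clock_equiv (real M) v v'"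
proof -
  from assms have "l = fst s" and "(v, \<nu>) \<in> foldr (Ext1 M) (SOME xs. set xs = UNIV \<and> distinct xs) (snd s)"
    unfolding sym_inst_def ExtX_sym_def ExtX_def by auto
  then show ?thesis
    unfolding sym_inst_def using foldr_Ext1_clock_equiv by fastforce
qed

definition guard_consts_le :: "('a, 'l, 'x::finite, 'p::finite) pta \<Rightarrow> ('p \<Rightarrow> real) \<Rightarrow> real \<Rightarrow> bool" where
  "guard_consts_le A \<nu> c \<longleftrightarrow> (\<forall>x r \<alpha> z. SG x r \<alpha> z \<in> guards_of A \<longrightarrow> lin_val \<nu> \<alpha> z \<le> c)"

lemma lin_val_le_maxC_sg:
  assumes "bounded_pta A" and "admissible A \<nu>"
  shows "lin_val \<nu> \<alpha> z \<le> maxC_sg A (SG x r \<alpha> z)"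
proof -
  have "real_of_int (\<alpha> p) * \<nu> p \<le> real_of_int (\<alpha> p) *
        (if \<alpha> p < 0 then real_of_ereal (dlo A p)
         else if \<alpha> p > 0 then real_of_ereal (dhi A p) else 0)" for p
  proof -
    have "dlo A p = ereal (real_of_ereal (dlo A p))" "dhi A p = ereal (real_of_ereal (dhi A p))"
      using assms(1) unfolding bounded_pta_def by (metis ereal_real)+
    then have "real_of_ereal (dlo A p) \<le> \<nu> p" "\<nu> p \<le> real_of_ereal (dhi A p)"
      using assms(2) unfolding admissible_def by (metis ereal_less_eq(3))+
    then show ?thesis
      by (auto intro: mult_left_mono mult_left_mono_neg)
  qed
  then show ?thesis
    unfolding lin_val_def by (auto intro: sum_mono)
qed

lemma guard_consts_le_maxC:
  assumes "wf_pta A" and "bounded_pta A" and "admissible A \<nu>" and "maxC A \<le> c"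
  shows "guard_consts_le A \<nu> c"
  unfolding guard_consts_le_def
proof (intro allI impI)
  fix x r \<alpha> z
  assume "SG x r \<alpha> z \<in> guards_of A"
  moreover have "finite (guards_of A)"
    using assms(1) unfolding guards_of_def wf_pta_def by auto
  ultimately have "maxC_sg A (SG x r \<alpha> z) \<le> maxC A"
    unfolding maxC_def by (intro Max_ge finite_imageI imageI)
  then show "lin_val \<nu> \<alpha> z \<le> c"
    using lin_val_le_maxC_sg[OF assms(2,3)] assms(4) by (meson order_trans)
qed

lemma sat_sg_clock_equiv:
  assumes "guard_consts_le A \<nu> c" and "g \<in> guards_of A" and "clock_equiv c v v'"
  shows "sat_sg v \<nu> g \<longleftrightarrow> sat_sg v' \<nu> g"
proof (cases g)
  case (SG x r \<alpha> z)
  then have "lin_val \<nu> \<alpha> z \<le> c"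
    using assms(1,2) unfolding guard_consts_le_def by blast
  moreover have "v x = v' x \<or> (c < v x \<and> c < v' x)"
    using assms(3) unfolding clock_equiv_def by blast
  ultimately show ?thesis
    using SG by (cases r) auto
qed

lemma sat_g_clock_equiv:
  assumes "guard_consts_le A \<nu> c" and "set g \<subseteq> guards_of A" and "clock_equiv c v v'"
  shows "sat_g v \<nu> g \<longleftrightarrow> sat_g v' \<nu> g"
  using sat_sg_clock_equiv[OF assms(1) _ assms(3)] assms(2) unfolding sat_g_def by blast

lemma is_state_clock_equiv:
  assumes "guard_consts_le A \<nu> c" and "0 \<le> c" and "clock_equiv c v v'"
    and "is_state A \<nu> (l, v)"
  shows "is_state A \<nu> (l, v')"
proof -
  have "l \<in> locs A" and "\<forall>x. 0 \<le> v x" and "sat_g v \<nu> (inv A l)"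
    using assms(4) unfolding is_state_def by auto
  moreover have "0 \<le> v' x" for x
    using assms(2,3) \<open>\<forall>x. 0 \<le> v x\<close> unfolding clock_equiv_def by (metis order.strict_trans1 less_imp_le)
  moreover have "set (inv A l) \<subseteq> guards_of A"
    using \<open>l \<in> locs A\<close> unfolding guards_of_def by auto
  ultimately show ?thesis
    using sat_g_clock_equiv[OF assms(1) _ assms(3)] unfolding is_state_def by auto
qed

lemma step_is_state:
  assumes "step A \<nu> p \<alpha> q"
  shows "is_state A \<nu> p" and "is_state A \<nu> q"
  using assms
proof (induction rule: step.induct)
  case (delay d l v)
  then show "is_state A \<nu> (l, v)" and "is_state A \<nu> (l, \<lambda>x. v x + d)"
    using spec[OF delay.hyps(2), of 0] spec[OF delay.hyps(2), of d] by simp_all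
qed

lemma step_clock_equiv:
  assumes "guard_consts_le A \<nu> c" and "0 \<le> c" and "clock_equiv c v v'"
    and "step A \<nu> (l, v) \<alpha> (l'', u)"
  shows "\<exists>u'. step A \<nu> (l, v') \<alpha> (l'', u') \<and> clock_equiv c u u'"
  using assms(4)
proof (cases rule: step.cases)
  case (delay d)
  have "is_state A \<nu> (l, \<lambda>x. v' x + d')" if "0 \<le> d'" "d' \<le> d" for d'
    using is_state_clock_equiv[OF assms(1,2) clock_equiv_delay[OF assms(3) \<open>0 \<le> d'\<close>]] delay that
    by blast
  then have "step A \<nu> (l, v') (Delay d) (l, \<lambda>x. v' x + d)"
    using delay by (intro step.delay) auto
  then show ?thesis
    using delay clock_equiv_delay[OF assms(3)] by auto
next
  case (discrete g a R)
  have "set g \<subseteq> guards_of A"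
    using discrete unfolding guards_of_def by blast
  then have "sat_g v' \<nu> g"
    using sat_g_clock_equiv[OF assms(1) _ assms(3)] discrete by blast
  moreover have "is_state A \<nu> (l, v')"
    using is_state_clock_equiv[OF assms(1-3)] discrete by blast
  moreover have "is_state A \<nu> (l'', \<lambda>x. if x \<in> R then 0 else v' x)"
    using is_state_clock_equiv[OF assms(1,2) clock_equiv_reset[OF assms(3)]] discrete by blast
  ultimately have "step A \<nu> (l, v') (Act a) (l'', \<lambda>x. if x \<in> R then 0 else v' x)"
    using discrete by (intro step.discrete) auto
  then show ?thesis
    using discrete clock_equiv_reset[OF assms(3)] by auto
qed

definition clock_equiv_rel :: "('a, 'l, 'x::finite, 'p::finite) pta \<Rightarrow> ('p \<Rightarrow> real) \<Rightarrow> real \<Rightarrow>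
    (('l \<times> ('x \<Rightarrow> real)) \<times> ('l \<times> ('x \<Rightarrow> real))) set" where
  "clock_equiv_rel A \<nu> c = {((l, v), (l, v')) | l v v'.
     clock_equiv c v v' \<and> is_state A \<nu> (l, v) \<and> is_state A \<nu> (l, v')}"

lemma clock_equiv_rel_simulates:
  assumes "guard_consts_le A \<nu> c" and "0 \<le> c"
    and "(p, q) \<in> clock_equiv_rel A \<nu> c" and "step A \<nu> p \<alpha> p'"
  shows "\<exists>q'. step A \<nu> q \<alpha> q' \<and> (p', q') \<in> clock_equiv_rel A \<nu> c"
proof -
  obtain l v v' where pq: "p = (l, v)" "q = (l, v')" "clock_equiv c v v'"
    using assms(3) unfolding clock_equiv_rel_def by blast
  obtain l'' u where p': "p' = (l'', u)"
    by fastforce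
  obtain u' where "step A \<nu> (l, v') \<alpha> (l'', u')" "clock_equiv c u u'"
    using step_clock_equiv[OF assms(1,2) pq(3)] assms(4) pq p' by blast
  then show ?thesis
    using assms(4) pq p' step_is_state unfolding clock_equiv_rel_def by blast
qed

lemma bisimulation_clock_equiv_rel:
  assumes "guard_consts_le A \<nu> c" and "0 \<le> c"
  shows "bisimulation A \<nu> (clock_equiv_rel A \<nu> c)"
  unfolding bisimulation_def
proof (intro ballI, clarify, intro conjI allI impI)
  fix p q
  assume pq: "(p, q) \<in> clock_equiv_rel A \<nu> c"
  have sym: "(q', p') \<in> clock_equiv_rel A \<nu> c" if "(p', q') \<in> clock_equiv_rel A \<nu> c" for p' q'
    using that unfolding clock_equiv_rel_def by (auto intro: clock_equiv_sym)
  show "is_state A \<nu> p" "is_state A \<nu> q"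
    using pq unfolding clock_equiv_rel_def by auto
  show "\<exists>q'. step A \<nu> q \<alpha> q' \<and> (p', q') \<in> clock_equiv_rel A \<nu> c"
    if "step A \<nu> p \<alpha> p'" for \<alpha> p'
    using clock_equiv_rel_simulates[OF assms pq that] .
  show "\<exists>p'. step A \<nu> p \<alpha> p' \<and> (p', q') \<in> clock_equiv_rel A \<nu> c"
    if "step A \<nu> q \<alpha> q'" for \<alpha> q'
    using clock_equiv_rel_simulates[OF assms sym[OF pq] that] sym by blast
qed

theorem mainTheorem4:
  fixes A :: "('a, 'l, 'x::finite, 'p::finite) pta"
    and s s' :: "('l, 'x, 'p) symstate"
    and M :: nat
    and \<nu> :: "'p \<Rightarrow> real"
  assumes "wf_pta A"
    and "bounded_pta A"
    and "real M \<ge> maxC A"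
    and "admissible A \<nu>"
    and "sym_inst \<nu> (ExtX_sym M s) = sym_inst \<nu> (ExtX_sym M s')"
  shows "\<forall>l v. (l, v) \<in> sym_inst \<nu> s \<and> is_state A \<nu> (l, v) \<longrightarrow>
           (\<exists>v'. (l, v') \<in> sym_inst \<nu> s' \<and> is_state A \<nu> (l, v') \<and>
                 bisimilar A \<nu> (l, v) (l, v'))"
proof (intro allI impI)
  fix l v
  assume lv: "(l, v) \<in> sym_inst \<nu> s \<and> is_state A \<nu> (l, v)"
  then have "(l, v) \<in> sym_inst \<nu> (ExtX_sym M s')"
    using sym_inst_subset_ExtX_sym assms(5) by blast
  then obtain v' where v': "(l, v') \<in> sym_inst \<nu> s'" "clock_equiv (real M) v v'"
    by (metis sym_inst_ExtX_sym_clock_equiv)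
  have guards: "guard_consts_le A \<nu> (real M)"
    using guard_consts_le_maxC assms(1-4) by blast
  have "is_state A \<nu> (l, v')"
    using is_state_clock_equiv[OF guards of_nat_0_le_iff v'(2)] lv by blast
  moreover have "bisimilar A \<nu> (l, v) (l, v')"
  proof -
    have "((l, v), (l, v')) \<in> clock_equiv_rel A \<nu> (real M)"
      unfolding clock_equiv_rel_def using v'(2) lv \<open>is_state A \<nu> (l, v')\<close> by blast
    then show ?thesis
      unfolding bisimilar_def using bisimulation_clock_equiv_rel[OF guards of_nat_0_le_iff] by blast
  qed
  ultimately show "\<exists>v'. (l, v') \<in> sym_inst \<nu> s' \<and> is_state A \<nu> (l, v') \<and> bisimilar A \<nu> (l, v) (l, v')"
    using v'(1) by blast
qed

end
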